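(* Let $\alpha=(\alpha_n)_{n\in\mathbb{N}}\in\ell^2$ and let $J_0=\sup_{m\ge0}(m+1)^{1/2}\big(\sum_{k=m}^\infty|\alpha_k|^2\big)^{1/2}$. The Rhaly operator $R_\alpha$ is bounded on $\ell^2$ if and only if $J_0<\infty$, and in this case $J_0\le\|R_\alpha\|\le2\sqrt2\,J_0$.
   Context: $\mathbb{N}=\{0,1,2,\dots\}$; $\ell^2$ is the space of square-summable functions $\mathbb{N}\to\mathbb{C}$. The Rhaly operator is $(R_\alpha f)(k)=\alpha_k\sum_{j=0}^k f(j)$, and $\|R_\alpha\|=\sup_{\|f\|_2=1}\|R_\alpha f\|_2$. *)

theory Defs
  imports "HOL-Analysis.Analysis"
begin

definition in_l2 :: "(nat \<Rightarrow> complex) \<Rightarrow> bool" where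
  "in_l2 f \<longleftrightarrow> summable (\<lambda>k. (cmod (f k))\<^sup>2)"

definition l2_norm :: "(nat \<Rightarrow> complex) \<Rightarrow> ereal" where
  "l2_norm f = (if in_l2 f then ereal (sqrt (\<Sum>k. (cmod (f k))\<^sup>2)) else \<infinity>)"

definition rhaly :: "(nat \<Rightarrow> complex) \<Rightarrow> (nat \<Rightarrow> complex) \<Rightarrow> (nat \<Rightarrow> complex)" where
  "rhaly \<alpha> f = (\<lambda>k. \<alpha> k * (\<Sum>j\<le>k. f j))"

definition rhaly_norm :: "(nat \<Rightarrow> complex) \<Rightarrow> ereal" where
  "rhaly_norm \<alpha> = (SUP f \<in> {f. in_l2 f \<and> l2_norm f = 1}. l2_norm (rhaly \<alpha> f))"

definition rhaly_bounded :: "(nat \<Rightarrow> complex) \<Rightarrow> bool" where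
  "rhaly_bounded \<alpha> \<longleftrightarrow>
     (\<forall>f. in_l2 f \<longrightarrow> in_l2 (rhaly \<alpha> f)) \<and>
     (\<exists>C::real. \<forall>f. in_l2 f \<longrightarrow> l2_norm (rhaly \<alpha> f) \<le> ereal C * l2_norm f)"

definition J0 :: "(nat \<Rightarrow> complex) \<Rightarrow> ereal" where
  "J0 \<alpha> = (SUP m. ereal (sqrt (real m + 1) * sqrt (\<Sum>k. (cmod (\<alpha> (k + m)))\<^sup>2)))"

end

theory Submission
  imports Defs
begin

text \<open>
  Testing R_\<alpha> on the normalised indicator of {0..m} shows
  sqrt (m+1) * sqrt (\<Sum>k\<ge>m. |\<alpha> k|^2) \<le> \<parallel>R_\<alpha>\<parallel>, hence J0 \<le> \<parallel>R_\<alpha>\<parallel>.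
  Conversely, let a = |f| with partial sums A. Since (A k)^2 \<le> \<Sum>j\<le>k. 2 a j A j,
  exchanging the order of summation and using (j+1) \<Sum>k\<ge>j. |\<alpha> k|^2 \<le> J0^2 gives
  \<Sum>k. |\<alpha> k|^2 (A k)^2 \<le> 2 J0^2 \<Sum>j. a j A j / (j+1), and a discrete Hardy inequality
  (telescoping plus Cauchy-Schwarz) bounds the last sum by 2 \<Sum>j. (a j)^2.
  This yields even \<parallel>R_\<alpha>\<parallel> \<le> 2 J0.
\<close>

lemma hardy_telescoping_le:
  fixes a :: "nat \<Rightarrow> real"
  defines "b \<equiv> \<lambda>k. (\<Sum>j\<le>k. a j) / (real k + 1)"
  shows "(\<Sum>k\<le>N. (b k)\<^sup>2 - 2 * a k * b k) \<le> - (real N + 1) * (b N)\<^sup>2"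
proof (induction N)
  case 0
  then show ?case by (simp add: b_def power2_eq_square)
next
  case (Suc N)
  have "(real N + 2) * b (Suc N) = (\<Sum>j\<le>Suc N. a j)" "(real N + 1) * b N = (\<Sum>j\<le>N. a j)"
    unfolding b_def by (simp_all add: field_simps)
  then have a_eq: "a (Suc N) = (real N + 2) * b (Suc N) - (real N + 1) * b N"
    by simp
  have "(\<Sum>k\<le>Suc N. (b k)\<^sup>2 - 2 * a k * b k)
          \<le> - (real N + 1) * (b N)\<^sup>2 + (b (Suc N))\<^sup>2 - 2 * a (Suc N) * b (Suc N)"
    using Suc by simp
  also have "\<dots> = - (real (Suc N) + 1) * (b (Suc N))\<^sup>2 - (real N + 1) * (b N - b (Suc N))\<^sup>2"
    unfolding a_eq by (simp add: power2_eq_square algebra_simps)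
  also have "\<dots> \<le> - (real (Suc N) + 1) * (b (Suc N))\<^sup>2"
    by simp
  finally show ?case .
qed

lemma hardy_bilinear_le:
  fixes a :: "nat \<Rightarrow> real"
  shows "(\<Sum>k\<le>N. a k * ((\<Sum>j\<le>k. a j) / (real k + 1))) \<le> 2 * (\<Sum>k\<le>N. (a k)\<^sup>2)"
proof -
  define b where "b \<equiv> \<lambda>k. (\<Sum>j\<le>k. a j) / (real k + 1)"
  define X where "X = (\<Sum>k\<le>N. a k * b k)"
  define Y where "Y = (\<Sum>k\<le>N. (b k)\<^sup>2)"
  define Z where "Z = (\<Sum>k\<le>N. (a k)\<^sup>2)"
  have "0 \<le> (real N + 1) * (b N)\<^sup>2"
    by simp
  then have "(\<Sum>k\<le>N. (b k)\<^sup>2 - 2 * a k * b k) \<le> 0"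
    using hardy_telescoping_le[of a N] mult_minus_left[of "real N + 1" "(b N)\<^sup>2"]
    unfolding b_def by linarith
  then have Y_le: "Y \<le> 2 * X"
    unfolding X_def Y_def by (simp add: sum_subtractf sum_distrib_left mult.assoc)
  have Z_nonneg: "Z \<ge> 0"
    unfolding Z_def by (auto intro!: sum_nonneg)
  have "X\<^sup>2 \<le> Z * Y"
    unfolding X_def Y_def Z_def by (rule Cauchy_Schwarz_ineq_sum)
  also have "\<dots> \<le> Z * (2 * X)"
    using Y_le Z_nonneg by (simp add: mult_left_mono)
  finally have "X * X \<le> (2 * Z) * X"
    by (simp add: power2_eq_square algebra_simps)
  then have "X \<le> 2 * Z"
    using Z_nonneg by (cases "X > 0") (auto simp: mult_le_cancel_right_pos)
  then show ?thesis
    unfolding X_def Z_def b_def by simp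
qed

lemma square_partial_sum_le:
  fixes a :: "nat \<Rightarrow> real"
  shows "(\<Sum>j\<le>k. a j)\<^sup>2 \<le> (\<Sum>j\<le>k. 2 * a j * (\<Sum>i\<le>j. a i))"
proof (induction k)
  case (Suc k)
  have "(\<Sum>j\<le>Suc k. a j)\<^sup>2
          = (\<Sum>j\<le>k. a j)\<^sup>2 + 2 * a (Suc k) * (\<Sum>j\<le>Suc k. a j) - (a (Suc k))\<^sup>2"
    by (simp add: power2_eq_square algebra_simps)
  also have "\<dots> \<le> (\<Sum>j\<le>k. a j)\<^sup>2 + 2 * a (Suc k) * (\<Sum>j\<le>Suc k. a j)"
    by simp
  also have "\<dots> \<le> (\<Sum>j\<le>Suc k. 2 * a j * (\<Sum>i\<le>j. a i))"
    using Suc by simp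
  finally show ?case .
qed (simp add: power2_eq_square)

lemma sum_atMost_partial_sums_swap:
  fixes w c :: "nat \<Rightarrow> 'a::comm_semiring_0"
  shows "(\<Sum>k\<le>N. w k * (\<Sum>j\<le>k. c j)) = (\<Sum>j\<le>N. c j * (\<Sum>k=j..N. w k))"
proof -
  have "(\<Sum>k\<le>N. w k * (\<Sum>j\<le>k. c j)) = (\<Sum>k\<le>N. \<Sum>j\<in>{j\<in>{..N}. j \<le> k}. w k * c j)"
    by (intro sum.cong) (auto simp: sum_distrib_left intro!: sum.cong)
  also have "\<dots> = (\<Sum>j\<le>N. \<Sum>k\<in>{k\<in>{..N}. j \<le> k}. w k * c j)"
    by (rule sum.swap_restrict) auto
  also have "\<dots> = (\<Sum>j\<le>N. c j * (\<Sum>k=j..N. w k))"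
    by (intro sum.cong) (auto simp: sum_distrib_left mult.commute intro!: sum.cong)
  finally show ?thesis .
qed

lemma weighted_partial_sums_le:
  fixes a w :: "nat \<Rightarrow> real"
  assumes a_nonneg: "\<And>j. a j \<ge> 0" and w_nonneg: "\<And>j. w j \<ge> 0"
    and tail_le: "\<And>m. m \<le> N \<Longrightarrow> (real m + 1) * (\<Sum>k=m..N. w k) \<le> B"
  shows "(\<Sum>k\<le>N. w k * (\<Sum>j\<le>k. a j)\<^sup>2) \<le> 4 * B * (\<Sum>k\<le>N. (a k)\<^sup>2)"
proof -
  define c where "c j = 2 * a j * (\<Sum>i\<le>j. a i)" for j
  have c_nonneg: "c j \<ge> 0" for j
    unfolding c_def using a_nonneg by (auto intro!: sum_nonneg mult_nonneg_nonneg)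
  have B_nonneg: "B \<ge> 0"
    using tail_le[of 0] sum_nonneg[of "{0..N}" w] w_nonneg by simp
  have "(\<Sum>k\<le>N. w k * (\<Sum>j\<le>k. a j)\<^sup>2) \<le> (\<Sum>k\<le>N. w k * (\<Sum>j\<le>k. c j))"
    unfolding c_def by (intro sum_mono mult_left_mono square_partial_sum_le w_nonneg)
  also have "\<dots> = (\<Sum>j\<le>N. c j * (\<Sum>k=j..N. w k))"
    by (rule sum_atMost_partial_sums_swap)
  also have "\<dots> \<le> (\<Sum>j\<le>N. c j * (B / (real j + 1)))"
    using tail_le by (intro sum_mono mult_left_mono c_nonneg) (simp add: field_simps)
  also have "\<dots> = 2 * B * (\<Sum>k\<le>N. a k * ((\<Sum>j\<le>k. a j) / (real k + 1)))"
    unfolding c_def sum_distrib_left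
    by (intro sum.cong refl) (simp add: sum_divide_distrib[symmetric] sum_distrib_left[symmetric])
  also have "\<dots> \<le> 2 * B * (2 * (\<Sum>k\<le>N. (a k)\<^sup>2))"
    using B_nonneg by (intro mult_left_mono hardy_bilinear_le) auto
  finally show ?thesis
    by simp
qed

lemma sum_atLeastAtMost_le_suminf_shift:
  fixes w :: "nat \<Rightarrow> real"
  assumes "summable w" "\<And>k. w k \<ge> 0"
  shows "(\<Sum>k=m..N. w k) \<le> (\<Sum>k. w (k + m))"
proof (cases "m \<le> N")
  case True
  have "(\<Sum>k=m..N. w k) = (\<Sum>k\<in>{0..N-m}. w (k + m))"
    using sum.shift_bounds_cl_nat_ivl[of w 0 m "N - m"] True by simp
  also have "\<dots> \<le> (\<Sum>k. w (k + m))"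
    using assms summable_ignore_initial_segment by (intro sum_le_suminf) auto
  finally show ?thesis .
qed (use assms summable_ignore_initial_segment in \<open>auto intro: suminf_nonneg\<close>)

lemma tail_sum_sq_nonneg:
  assumes "in_l2 \<alpha>"
  shows "0 \<le> (\<Sum>k. (cmod (\<alpha> (k + m)))\<^sup>2)"
proof -
  have "summable (\<lambda>k. (cmod (\<alpha> (k + m)))\<^sup>2)"
    using assms unfolding in_l2_def by (rule summable_ignore_initial_segment)
  then show ?thesis
    by (rule suminf_nonneg) simp
qed

lemma rhaly_sum_sq_le:
  fixes \<alpha> f :: "nat \<Rightarrow> complex"
  assumes \<alpha>: "in_l2 \<alpha>" and f: "in_l2 f"
    and tail_le: "\<And>m. (real m + 1) * (\<Sum>k. (cmod (\<alpha> (k + m)))\<^sup>2) \<le> B"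
  shows "in_l2 (rhaly \<alpha> f)"
    and "(\<Sum>k. (cmod (rhaly \<alpha> f k))\<^sup>2) \<le> 4 * B * (\<Sum>k. (cmod (f k))\<^sup>2)"
proof -
  define w where "w k = (cmod (\<alpha> k))\<^sup>2" for k
  define a where "a k = cmod (f k)" for k
  have w_summable: "summable w"
    using \<alpha> unfolding in_l2_def w_def .
  have a_summable: "summable (\<lambda>k. (a k)\<^sup>2)"
    using f unfolding in_l2_def a_def .
  have "0 \<le> (real 0 + 1) * (\<Sum>k. (cmod (\<alpha> (k + 0)))\<^sup>2)"
    by (intro mult_nonneg_nonneg tail_sum_sq_nonneg[OF \<alpha>]) simp
  then have B_nonneg: "B \<ge> 0"
    using tail_le[of 0] by (rule order_trans)
  have partial_le: "(\<Sum>k<n. (cmod (rhaly \<alpha> f k))\<^sup>2) \<le> 4 * B * (\<Sum>k. (cmod (f k))\<^sup>2)" for n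
  proof (cases n)
    case 0
    then show ?thesis
      using B_nonneg suminf_nonneg[OF a_summable] unfolding a_def by simp
  next
    case (Suc N)
    have "(\<Sum>k<n. (cmod (rhaly \<alpha> f k))\<^sup>2) \<le> (\<Sum>k\<le>N. w k * (\<Sum>j\<le>k. a j)\<^sup>2)"
      unfolding Suc lessThan_Suc_atMost rhaly_def w_def a_def
      by (intro sum_mono)
        (auto simp: norm_mult power_mult_distrib intro!: mult_left_mono power_mono norm_sum)
    also have "\<dots> \<le> 4 * B * (\<Sum>k\<le>N. (a k)\<^sup>2)"
    proof (rule weighted_partial_sums_le)
      fix m
      have "(\<Sum>k=m..N. w k) \<le> (\<Sum>k. w (k + m))"
        by (intro sum_atLeastAtMost_le_suminf_shift w_summable) (simp add: w_def)
      then have "(real m + 1) * (\<Sum>k=m..N. w k) \<le> (real m + 1) * (\<Sum>k. w (k + m))"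
        by (rule mult_left_mono) simp
      then show "(real m + 1) * (\<Sum>k=m..N. w k) \<le> B"
        using tail_le[of m] unfolding w_def by linarith
    qed (auto simp: a_def w_def)
    also have "\<dots> \<le> 4 * B * (\<Sum>k. (a k)\<^sup>2)"
      using B_nonneg a_summable by (intro mult_left_mono sum_le_suminf) auto
    finally show ?thesis
      unfolding a_def .
  qed
  show "in_l2 (rhaly \<alpha> f)"
    unfolding in_l2_def by (rule summableI_nonneg_bounded[OF _ partial_le]) simp
  then show "(\<Sum>k. (cmod (rhaly \<alpha> f k))\<^sup>2) \<le> 4 * B * (\<Sum>k. (cmod (f k))\<^sup>2)"
    unfolding in_l2_def by (rule suminf_le_const[OF _ partial_le])
qed

lemma J0_nonneg:
  assumes "in_l2 \<alpha>"
  shows "0 \<le> J0 \<alpha>"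
  unfolding J0_def using tail_sum_sq_nonneg[OF assms, of 0] by (intro SUP_upper2[of 0]) auto

lemma rhaly_l2_norm_le:
  assumes \<alpha>: "in_l2 \<alpha>" and J: "J0 \<alpha> \<le> ereal J" and f: "in_l2 f"
  shows "in_l2 (rhaly \<alpha> f)" and "l2_norm (rhaly \<alpha> f) \<le> ereal (2 * J) * l2_norm f"
proof -
  have J_nonneg: "J \<ge> 0"
    using order_trans[OF J0_nonneg[OF \<alpha>] J] by simp
  have "(real m + 1) * (\<Sum>k. (cmod (\<alpha> (k + m)))\<^sup>2) \<le> J\<^sup>2" for m
  proof -
    have "ereal (sqrt (real m + 1) * sqrt (\<Sum>k. (cmod (\<alpha> (k + m)))\<^sup>2)) \<le> ereal J"
      using J unfolding J0_def SUP_le_iff by blast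
    then have "sqrt ((real m + 1) * (\<Sum>k. (cmod (\<alpha> (k + m)))\<^sup>2)) \<le> J"
      by (simp add: real_sqrt_mult)
    then show ?thesis
      using tail_sum_sq_nonneg[OF \<alpha>, of m] by (simp add: real_le_lsqrt real_sqrt_le_iff sqrt_le_D)
  qed
  note bound = rhaly_sum_sq_le[OF \<alpha> f this]
  show "in_l2 (rhaly \<alpha> f)"
    by (fact bound(1))
  have "sqrt (\<Sum>k. (cmod (rhaly \<alpha> f k))\<^sup>2) \<le> sqrt (4 * J\<^sup>2 * (\<Sum>k. (cmod (f k))\<^sup>2))"
    using bound(2) by simp
  also have "\<dots> = 2 * J * sqrt (\<Sum>k. (cmod (f k))\<^sup>2)"
    using J_nonneg by (simp add: real_sqrt_mult)
  finally show "l2_norm (rhaly \<alpha> f) \<le> ereal (2 * J) * l2_norm f"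
    using bound(1) f unfolding l2_norm_def by simp
qed

lemma rhaly_norm_le:
  assumes "in_l2 \<alpha>" and "J0 \<alpha> \<le> ereal J"
  shows "rhaly_norm \<alpha> \<le> ereal (2 * J)"
  unfolding rhaly_norm_def
proof (rule SUP_least)
  fix f
  assume "f \<in> {f. in_l2 f \<and> l2_norm f = 1}"
  then show "l2_norm (rhaly \<alpha> f) \<le> ereal (2 * J)"
    using rhaly_l2_norm_le(2)[OF assms, of f] by simp
qed

definition unit_block :: "nat \<Rightarrow> nat \<Rightarrow> complex" where
  "unit_block m j = (if j \<le> m then complex_of_real (1 / sqrt (real m + 1)) else 0)"

lemma in_l2_unit_block: "in_l2 (unit_block m)"
  unfolding in_l2_def unit_block_def
  by (rule summable_finite[of "{..m}"]) auto

lemma l2_norm_unit_block: "l2_norm (unit_block m) = 1"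
proof -
  have vanish: "n \<notin> {..m} \<Longrightarrow> (cmod (unit_block m n))\<^sup>2 = 0" for n
    unfolding unit_block_def by simp
  have "(\<Sum>n. (cmod (unit_block m n))\<^sup>2) = (\<Sum>n\<le>m. (cmod (unit_block m n))\<^sup>2)"
    by (rule suminf_finite[OF _ vanish]) auto
  also have "\<dots> = (\<Sum>n\<le>m. 1 / (real m + 1))"
    by (intro sum.cong) (simp_all add: unit_block_def power_divide norm_divide)
  finally show ?thesis
    using in_l2_unit_block unfolding l2_norm_def by simp
qed

lemma l2_norm_rhaly_unit_block_ge:
  "ereal (sqrt (real m + 1) * sqrt (\<Sum>k. (cmod (\<alpha> (k + m)))\<^sup>2))
     \<le> l2_norm (rhaly \<alpha> (unit_block m))"
proof (cases "in_l2 (rhaly \<alpha> (unit_block m))")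
  case False
  then show ?thesis
    unfolding l2_norm_def by simp
next
  case True
  let ?g = "\<lambda>k. (cmod (rhaly \<alpha> (unit_block m) k))\<^sup>2"
  have g_summable: "summable ?g"
    using True unfolding in_l2_def .
  have g_shift: "?g (k + m) = (real m + 1) * (cmod (\<alpha> (k + m)))\<^sup>2" for k
  proof -
    have "(\<Sum>j\<le>k+m. unit_block m j) = (\<Sum>j\<le>m. complex_of_real (1 / sqrt (real m + 1)))"
      by (rule sum.mono_neutral_cong_right) (auto simp: unit_block_def)
    also have "\<dots> = complex_of_real ((real m + 1) / sqrt (real m + 1))"
      by simp
    also have "(real m + 1) / sqrt (real m + 1) = sqrt (real m + 1)"
      by (rule real_div_sqrt) simp
    finally show ?thesis
      unfolding rhaly_def by (simp add: norm_mult power_mult_distrib)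
  qed
  have "(real m + 1) * (\<Sum>k. (cmod (\<alpha> (k + m)))\<^sup>2) = (\<Sum>k. ?g (k + m))"
    using summable_ignore_initial_segment[OF g_summable, of m]
    unfolding g_shift by (intro suminf_mult[symmetric]) simp
  also have "\<dots> \<le> (\<Sum>k. ?g k)"
    using suminf_split_initial_segment[OF g_summable, of m] by (simp add: sum_nonneg)
  finally have "sqrt ((real m + 1) * (\<Sum>k. (cmod (\<alpha> (k + m)))\<^sup>2)) \<le> sqrt (\<Sum>k. ?g k)"
    by simp
  then show ?thesis
    using True unfolding l2_norm_def by (simp add: real_sqrt_mult)
qed

lemma J0_le_of_unit_blocks:
  assumes "\<And>m. l2_norm (rhaly \<alpha> (unit_block m)) \<le> c"
  shows "J0 \<alpha> \<le> c"
  unfolding J0_def using l2_norm_rhaly_unit_block_ge assms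
  by (intro SUP_least) (blast intro: order_trans)

theorem theorem2p3:
  fixes \<alpha> :: "nat \<Rightarrow> complex"
  assumes "in_l2 \<alpha>"
  shows "(rhaly_bounded \<alpha> \<longleftrightarrow> J0 \<alpha> < \<infinity>) \<and>
         (rhaly_bounded \<alpha> \<longrightarrow>
            J0 \<alpha> \<le> rhaly_norm \<alpha> \<and> rhaly_norm \<alpha> \<le> ereal (2 * sqrt 2) * J0 \<alpha>)"
proof -
  have lower: "J0 \<alpha> \<le> rhaly_norm \<alpha>"
    unfolding rhaly_norm_def using in_l2_unit_block l2_norm_unit_block
    by (intro J0_le_of_unit_blocks SUP_upper) auto
  have finite_if_bounded: "J0 \<alpha> < \<infinity>" if bounded: "rhaly_bounded \<alpha>"
  proof -
    obtain C where "\<And>f. in_l2 f \<Longrightarrow> l2_norm (rhaly \<alpha> f) \<le> ereal C * l2_norm f"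
      using bounded unfolding rhaly_bounded_def by blast
    then have "J0 \<alpha> \<le> ereal C"
      using in_l2_unit_block l2_norm_unit_block by (intro J0_le_of_unit_blocks) force
    then show ?thesis
      using order_le_less_trans[of "J0 \<alpha>" "ereal C" \<infinity>] by simp
  qed
  have upper: "rhaly_bounded \<alpha> \<and> rhaly_norm \<alpha> \<le> ereal (2 * sqrt 2) * J0 \<alpha>"
    if finite: "J0 \<alpha> < \<infinity>"
  proof -
    obtain J where J: "J0 \<alpha> = ereal J" "J \<ge> 0"
      using finite J0_nonneg[OF assms] by (cases "J0 \<alpha>") auto
    then have "rhaly_bounded \<alpha>"
      using rhaly_l2_norm_le[OF assms J(1)[THEN eq_refl]] unfolding rhaly_bounded_def by blast
    moreover have "rhaly_norm \<alpha> \<le> ereal (2 * J)"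
      using J by (intro rhaly_norm_le assms) simp
    moreover have "2 * J \<le> 2 * sqrt 2 * J"
      using J(2) by (intro mult_right_mono) simp_all
    ultimately show ?thesis
      using J(1) by (simp add: order_trans)
  qed
  show ?thesis
    using lower finite_if_bounded upper by blast
qed

end
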